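(* With the notation below, for every nonzero triple labeling $J:\mathcal H_\kappa\to\mathscr T$, the set $J^{(1)}(V^{(3)})$, viewed as a subset of $O_m$ via $|ij\rangle\mapsto(i,j)$, is a valid set. Conversely, for every valid set $S\subseteq O_m$ there exists a nonzero triple labeling $J$ with $J^{(1)}(V^{(3)})=S$, and it is unique up to replacing $J$ by $J\circ\sigma$ for bijections $\sigma$ of $\mathcal H_\kappa$ satisfying $\sigma(V^{(k)})=V^{(k)}$ for $k=1,2,3$.
   Context: Let $m>1$ be odd, $\kappa=\frac{m^2-1}2$, $a=\frac{m+1}2$, $\bar i=m+1-i$. $O_m=([m]\times[m])\setminus\{(a,a)\}$; $\tau(i,j)=(j,\bar i)$ and $\iota(S)=O_m\setminus S$; $S\subseteq O_m$ is valid if $|S|=\kappa$, $\tau(S)=\iota(S)$, and $|\{j:(i,j)\in S\}|=|i-\bar i|$ for all $i\in[m]$. $\mathcal H_\kappa$ is the set of $(i,j,k)\in[\kappa+1]^3$ with at least two coordinates equal to $1$, fixed with a total order; $y^0=(1,1,1)$, $V^{(1)}=\{(i,1,1):i\ge2\}$, $V^{(2)}=\{(1,j,1):j\ge2\}$, $V^{(3)}=\{(1,1,k):k\ge2\}$. Its $k$-slices form the set partition $E^{(k)}$ consisting of $e^{(k)}=V^{(k+1)}\cup V^{(k+2)}\cup\{y^0\}$ (indices mod 3, $|e^{(k)}|=m^2$) and the singletons $\{y\}$, $y\in V^{(k)}$. Let $|ij\rangle$ ($i,j\in[m]$) be the standard basis of $\mathbb C^{m\times m}$ and $|1\rangle,\dots,|m^2\rangle$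 the standard basis of $\mathbb C^{m^2}$. Let $\mathscr T=\{(|ij\rangle,|jl\rangle,|li\rangle):i,j,l\in[m]\}$; a triple labeling is a map $J=(J^{(1)},J^{(2)},J^{(3)}):\mathcal H_\kappa\to\mathscr T$. Let $\Gamma=\mathbb C[X^{(k)}_i:k\in[3],i\in[m]]$, fix a bijection $\varphi:O_m\to\{2,\dots,m^2\}$, and define $\Gamma$-linear maps $A^{(k)}:\Gamma^{m\times m}\to\Gamma^{m^2}$ by $A^{(k)}|aa\rangle=X^{(k)}_a|1\rangle$; $A^{(k)}|i\bar i\rangle=|\varphi(i,\bar i)\rangle+X^{(k)}_i|1\rangle$ for $i\neq a$; $A^{(k)}|ij\rangle=|\varphi(i,j)\rangle$ for $j\neq\bar i$. For a labeling $J$ let $AJ$ be the labeling $y\mapsto(A^{(1)}J^{(1)}(y),A^{(2)}J^{(2)}(y),A^{(3)}J^{(3)}(y))$ and $\mathrm{eval}_{\mathcal H_\kappa}(AJ)=\prod_{k=1}^3\prod_{e\in E^{(k)}}\det(AJ)^{(k)}|_e\in\Gamma$, where $\det L|_e$ is the determinant of the $|e|\times|e|$ matrix whose columns are $L(s)$, $s\in e$ in the fixed order, truncated to their first $|e|$ coordinates. Let $\mathcal X=\prod_{k=1}^3X^{(k)}_a\prod_{i=1}^m(X^{(k)}_i)^{|i-\bar i|}$. A triple labeling $J$ is nonzero if the coefficient of the monomial $\mathcal X$ in $\mathrm{eval}_{\mathcal H_\kappa}(AJ)$ is nonzero. *)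

theory Defs
  imports "HOL-Library.Poly_Mapping" "Jordan_Normal_Form.Determinant"
begin

definition kap :: "nat \<Rightarrow> nat" where "kap m = (m^2 - 1) div 2"
definition mid :: "nat \<Rightarrow> nat" where "mid m = (m + 1) div 2"
definition bar :: "nat \<Rightarrow> nat \<Rightarrow> nat" where "bar m i = m + 1 - i"

definition Om :: "nat \<Rightarrow> (nat \<times> nat) set" where
  "Om m = ({1..m} \<times> {1..m}) - {(mid m, mid m)}"

definition tau :: "nat \<Rightarrow> nat \<times> nat \<Rightarrow> nat \<times> nat" where
  "tau m p = (snd p, bar m (fst p))"

definition iota :: "nat \<Rightarrow> (nat \<times> nat) set \<Rightarrow> (nat \<times> nat) set" where
  "iota m S = Om m - S"

definition valid :: "nat \<Rightarrow> (nat \<times> nat) set \<Rightarrow> bool" where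
  "valid m S \<longleftrightarrow> S \<subseteq> Om m \<and> card S = kap m \<and> tau m ` S = iota m S \<and>
     (\<forall>i\<in>{1..m}. card {j. (i, j) \<in> S} = nat \<bar>int i - int (bar m i)\<bar>)"

type_synonym vtx = "nat \<times> nat \<times> nat"

definition Hk :: "nat \<Rightarrow> vtx set" where
  "Hk m = {(i, j, k). i \<in> {1..kap m + 1} \<and> j \<in> {1..kap m + 1} \<and> k \<in> {1..kap m + 1} \<and>
            ((i = 1 \<and> j = 1) \<or> (i = 1 \<and> k = 1) \<or> (j = 1 \<and> k = 1))}"

definition y0 :: vtx where "y0 = (1, 1, 1)"

definition V :: "nat \<Rightarrow> nat \<Rightarrow> vtx set" where
  "V m k = (if k = 1 then {(i, 1, 1) | i. 2 \<le> i \<and> i \<le> kap m + 1}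
            else if k = 2 then {(1, j, 1) | j. 2 \<le> j \<and> j \<le> kap m + 1}
            else {(1, 1, l) | l. 2 \<le> l \<and> l \<le> kap m + 1})"

definition nxt :: "nat \<Rightarrow> nat" where "nxt k = (k mod 3) + 1"

definition bigblock :: "nat \<Rightarrow> nat \<Rightarrow> vtx set" where
  "bigblock m k = V m (nxt k) \<union> V m (nxt (nxt k)) \<union> {y0}"

definition Epart :: "nat \<Rightarrow> nat \<Rightarrow> vtx set set" where
  "Epart m k = insert (bigblock m k) ((\<lambda>y. {y}) ` V m k)"

text \<open>A label (|ij>,|jl>,|li>) is represented by the triple of index pairs ((i,j),(j,l),(l,i)).\<close>
type_synonym label = "(nat \<times> nat) \<times> (nat \<times> nat) \<times> (nat \<times> nat)"

definition triple_labeling :: "nat \<Rightarrow> (vtx \<Rightarrow> label) \<Rightarrow> bool" where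
  "triple_labeling m J \<longleftrightarrow>
     (\<forall>y\<in>Hk m. \<exists>i\<in>{1..m}. \<exists>j\<in>{1..m}. \<exists>l\<in>{1..m}. J y = ((i, j), (j, l), (l, i)))"

definition Jc :: "(vtx \<Rightarrow> label) \<Rightarrow> nat \<Rightarrow> vtx \<Rightarrow> nat \<times> nat" where
  "Jc J k y = (if k = 1 then fst (J y) else if k = 2 then fst (snd (J y)) else snd (snd (J y)))"

text \<open>Gamma = C[X^(k)_i]: polynomials with variable (k,i) represented via Poly_Mapping.\<close>
type_synonym gpoly = "((nat \<times> nat) \<Rightarrow>\<^sub>0 nat) \<Rightarrow>\<^sub>0 complex"

definition Xv :: "nat \<Rightarrow> nat \<Rightarrow> gpoly" where
  "Xv k i = Poly_Mapping.single (Poly_Mapping.single (k, i) 1) 1"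

text \<open>Coordinate r (1-based, r in 1..m^2) of A^(k) |ij>.\<close>
definition Avec :: "nat \<Rightarrow> (nat \<times> nat \<Rightarrow> nat) \<Rightarrow> nat \<Rightarrow> nat \<times> nat \<Rightarrow> nat \<Rightarrow> gpoly" where
  "Avec m \<phi> k p r =
     (let (i, j) = p in
      (if (i, j) = (mid m, mid m) then (if r = 1 then Xv k (mid m) else 0)
       else (if \<phi> (i, j) = r then 1 else 0) + (if r = 1 \<and> j = bar m i then Xv k i else 0)))"

text \<open>det (AJ)^(k)|_e: columns A^(k) J^(k)(s), s in e in the fixed order hs, truncated to the
  first |e| coordinates.\<close>
definition blockdet :: "nat \<Rightarrow> (nat \<times> nat \<Rightarrow> nat) \<Rightarrow> vtx list \<Rightarrow> (vtx \<Rightarrow> label) \<Rightarrow> nat \<Rightarrow> vtx set \<Rightarrow> gpoly" where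
  "blockdet m \<phi> hs J k e =
     (let cols = filter (\<lambda>y. y \<in> e) hs; n = card e in
      det (mat n n (\<lambda>(r, c). Avec m \<phi> k (Jc J k (cols ! c)) (r + 1))))"

definition evalH :: "nat \<Rightarrow> (nat \<times> nat \<Rightarrow> nat) \<Rightarrow> vtx list \<Rightarrow> (vtx \<Rightarrow> label) \<Rightarrow> gpoly" where
  "evalH m \<phi> hs J = (\<Prod>k\<in>{1,2,3}. \<Prod>e\<in>Epart m k. blockdet m \<phi> hs J k e)"

text \<open>The exponent vector of the monomial
  X = prod_k X^(k)_a prod_i (X^(k)_i)^{|i - bar i|}.\<close>
definition monoX :: "nat \<Rightarrow> (nat \<times> nat) \<Rightarrow>\<^sub>0 nat" where
  "monoX m = (\<Sum>k\<in>{1,2,3}. Poly_Mapping.single (k, mid m) 1 +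
      (\<Sum>i\<in>{1..m}. Poly_Mapping.single (k, i) (nat \<bar>int i - int (bar m i)\<bar>)))"

definition nonzero_labeling :: "nat \<Rightarrow> (nat \<times> nat \<Rightarrow> nat) \<Rightarrow> vtx list \<Rightarrow> (vtx \<Rightarrow> label) \<Rightarrow> bool" where
  "nonzero_labeling m \<phi> hs J \<longleftrightarrow> Poly_Mapping.lookup (evalH m \<phi> hs J) (monoX m) \<noteq> 0"

end

theory Submission
  imports Defs
begin

text \<open>
  For a triple labeling J each block determinant of AJ is a single monomial up to a coefficient.
  On the big block e of the k-th slice partition the columns below the first row form a permutation
  matrix exactly when J^(k) maps e bijectively onto the m x m square, and then the determinant is
  the first-row entry X^(k)_a of the column labelled by the centre; otherwise two columns coincide. A singleton
  {y} contributes X^(k)_i exactly when J^(k)(y) is the antidiagonal entry (i, bar i). Hence J is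
  nonzero iff it is admissible: the big blocks are bijective, the labels on V^(k) are antidiagonal
  in their k-th component, and the first coordinates there have the row counts |i - bar i|.

  In an admissible labeling the label of y in V^(k) is determined by its (k+1)-th component p: the
  (k+2)-th one is tau p. Bijectivity of the big blocks then says that tau(S_k) and S_(k+1) partition
  O_m, where S_k is the set of (k+1)-th components on V^(k). Then tau^2 carries S_k to S_(k+2),
  and as tau has order four while k runs through a 3-cycle, S_k = S_(k+4) = S_(k+1). So all three
  sets equal S and tau(S) = O_m - S: S is valid. Conversely bijections of the V^(k) onto a valid
  S assemble to an admissible labeling, and two admissible labelings with the same S differ by the
  permutation of each V^(k) that matches their (k+1)-th components.
\<close>

lemma card_row_image:
  assumes "inj_on f A"
  shows "card {j. (i, j) \<in> f ` A} = card {y \<in> A. fst (f y) = i}"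
proof -
  have "card {j. (i, j) \<in> f ` A} = card (Pair i ` {j. (i, j) \<in> f ` A})"
    by (rule card_image[symmetric]) (simp add: inj_on_def)
  also have "Pair i ` {j. (i, j) \<in> f ` A} = f ` {y \<in> A. fst (f y) = i}"
  proof (intro equalityI subsetI)
    fix p assume "p \<in> Pair i ` {j. (i, j) \<in> f ` A}"
    then obtain y where "y \<in> A" "p = f y" "fst p = i"
      by (auto simp: image_iff) (metis fst_conv)
    then show "p \<in> f ` {y \<in> A. fst (f y) = i}"
      by blast
  next
    fix p assume "p \<in> f ` {y \<in> A. fst (f y) = i}"
    then obtain y where "y \<in> A" "p = f y" "fst p = i"
      by blast
    then show "p \<in> Pair i ` {j. (i, j) \<in> f ` A}"
      by (metis (mono_tags) image_eqI mem_Collect_eq prod.collapse)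
  qed
  also have "card \<dots> = card {y \<in> A. fst (f y) = i}"
    using assms by (intro card_image) (auto intro: inj_on_subset)
  finally show ?thesis .
qed

lemma bij_betw_Un_singleton_partition:
  assumes bij: "bij_betw f (A \<union> B \<union> {a}) (X \<union> {c})" and c: "c \<notin> X"
    and A: "f ` A \<subseteq> X" and B: "f ` B \<subseteq> X" and AB: "A \<inter> B = {}" and a: "a \<notin> A \<union> B"
  shows "f a = c" and "f ` A = X - f ` B"
proof -
  have img: "f ` A \<union> f ` B \<union> {f a} = X \<union> {c}"
    using bij_betw_imp_surj_on[OF bij] by (simp add: image_Un)
  then show fa: "f a = c"
    using A B c by blast
  have "f ` A \<inter> f ` B = {}"
    using inj_on_image_Int[OF bij_betw_imp_inj_on[OF bij], of A B] AB by auto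
  then show "f ` A = X - f ` B"
    using img fa A c by blast
qed

lemma bij_betw_Un_singletonI:
  assumes "bij_betw f A X" "bij_betw f B Y" "A \<inter> B = {}" "X \<inter> Y = {}"
    and "a \<notin> A \<union> B" "c \<notin> X \<union> Y" "f a = c"
  shows "bij_betw f (A \<union> B \<union> {a}) (X \<union> Y \<union> {c})"
  using notIn_Un_bij_betw[of a "A \<union> B" f "X \<union> Y"] bij_betw_combine[of f A X B Y] assms by simp

lemma bij_betw_inv_into_comp:
  assumes f: "bij_betw f A B" and f': "bij_betw f' A B"
  shows "bij_betw (\<lambda>y. inv_into A f (f' y)) A A" and "y \<in> A \<Longrightarrow> f (inv_into A f (f' y)) = f' y"
proof -
  show "bij_betw (\<lambda>y. inv_into A f (f' y)) A A"
    using bij_betw_trans[OF f' bij_betw_inv_into[OF f]] by (simp add: comp_def)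
  show "f (inv_into A f (f' y)) = f' y" if "y \<in> A"
    using bij_betw_inv_into_right[OF f bij_betw_apply[OF f' that]] .
qed

lemma inj_on_imp_bij_betw_card:
  assumes "finite B" "f ` A \<subseteq> B" "card A = card B" "inj_on f A"
  shows "bij_betw f A B"
  using assms by (simp add: bij_betw_def card_subset_eq card_image)

lemma card_Collect_bij_betw:
  assumes "bij_betw \<sigma> A A"
  shows "card {y \<in> A. P (\<sigma> y)} = card {y \<in> A. P y}"
proof -
  have "\<sigma> ` {y \<in> A. P (\<sigma> y)} = {y \<in> \<sigma> ` A. P y}"
    by blast
  also have "\<dots> = {y \<in> A. P y}"
    using bij_betw_imp_surj_on[OF assms] by simp
  finally have "card {y \<in> A. P y} = card (\<sigma> ` {y \<in> A. P (\<sigma> y)})"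
    by simp
  also have "\<dots> = card {y \<in> A. P (\<sigma> y)}"
    using bij_betw_imp_inj_on[OF assms] by (intro card_image) (auto intro: inj_on_subset)
  finally show ?thesis by simp
qed

lemma permutes_eq_if_eq_off_point:
  assumes p: "p permutes A" and q: "q permutes A" and eq: "\<And>x. x \<in> A \<Longrightarrow> x \<noteq> a \<Longrightarrow> p x = q x"
  shows "p = q"
proof (rule ext)
  fix x
  show "p x = q x"
  proof (cases "x \<in> A")
    case False
    then show ?thesis
      using permutes_not_in[OF p] permutes_not_in[OF q] by simp
  next
    case x: True
    show ?thesis
    proof (cases "x = a")
      case False
      then show ?thesis using eq x by simp
    next
      case True
      have "q a \<in> A"
        using x True by (simp add: permutes_in_image[OF q])
      then have "q a \<in> p ` A"
        by (simp only: permutes_image[OF p])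
      then obtain b where b: "b \<in> A" "q a = p b"
        by (rule imageE)
      have "b = a"
      proof (rule ccontr)
        assume "b \<noteq> a"
        then have "q b = q a"
          using eq[OF b(1)] b(2) by simp
        then show False
          using \<open>b \<noteq> a\<close> permutes_inj[OF q] by (simp add: inj_eq)
      qed
      then show ?thesis
        using True b(2) by simp
    qed
  qed
qed

lemma det_eq_single_permutation:
  fixes M :: "'a::comm_ring_1 mat"
  assumes M: "M \<in> carrier_mat n n" and \<pi>: "\<pi> permutes {0..<n}"
    and other: "\<And>p. p permutes {0..<n} \<Longrightarrow> p \<noteq> \<pi> \<Longrightarrow> (\<Prod>i = 0..<n. M $$ (i, p i)) = 0"
  shows "det M = of_int (sign \<pi>) * (\<Prod>i = 0..<n. M $$ (i, \<pi> i))"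
proof -
  have "det M = (\<Sum>p\<in>{p. p permutes {0..<n}}. signof p * (\<Prod>i = 0..<n. M $$ (i, p i)))"
    by (rule det_def'[OF M])
  also have "\<dots> = signof \<pi> * (\<Prod>i = 0..<n. M $$ (i, \<pi> i)) +
      (\<Sum>p\<in>{p. p permutes {0..<n}} - {\<pi>}. signof p * (\<Prod>i = 0..<n. M $$ (i, p i)))"
    using \<pi> by (intro sum.remove) (simp_all add: finite_permutations)
  also have "(\<Sum>p\<in>{p. p permutes {0..<n}} - {\<pi>}. signof p * (\<Prod>i = 0..<n. M $$ (i, p i))) = 0"
    using other by (intro sum.neutral) simp
  finally show ?thesis
    by simp
qed

text \<open>If the rows other than the first are those of the permutation matrix of g, only the
  permutation inverse to g survives in the Leibniz expansion.\<close>
lemma det_eq_first_row_entry: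
  fixes M :: "'a::comm_ring_1 mat"
  assumes M: "M \<in> carrier_mat n n" and n: "0 < n" and g: "bij_betw g {0..<n} {0..<n}"
    and rows: "\<And>i c. 0 < i \<Longrightarrow> i < n \<Longrightarrow> c < n \<Longrightarrow> M $$ (i, c) = (if g c = i then 1 else 0)"
  shows "\<exists>s::int. (s = 1 \<or> s = -1) \<and> det M = of_int s * M $$ (0, inv_into {0..<n} g 0)"
proof -
  define h where "h = inv_into {0..<n} g"
  define \<pi> where "\<pi> i = (if i < n then h i else i)" for i
  have h: "bij_betw h {0..<n} {0..<n}"
    unfolding h_def using g by (rule bij_betw_inv_into)
  have "bij_betw \<pi> {0..<n} {0..<n}"
    using h by (rule bij_betw_cong[THEN iffD1, rotated]) (simp add: \<pi>_def)
  then have \<pi>: "\<pi> permutes {0..<n}"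
    by (rule bij_imp_permutes) (simp add: \<pi>_def)
  have other: "(\<Prod>i = 0..<n. M $$ (i, p i)) = 0" if p: "p permutes {0..<n}" "p \<noteq> \<pi>" for p
  proof -
    obtain i where i: "i < n" "i \<noteq> 0" "p i \<noteq> \<pi> i"
      using permutes_eq_if_eq_off_point[OF p(1) \<pi>, of 0] p(2) by auto
    have "p i < n"
      using permutes_in_image[OF p(1)] i(1) by simp
    moreover have "g (p i) \<noteq> i"
    proof
      assume "g (p i) = i"
      then have "p i = h i"
        using \<open>p i < n\<close> g inv_into_f_f[of g "{0..<n}" "p i"] by (auto simp: h_def bij_betw_def)
      then show False
        using i by (simp add: \<pi>_def)
    qed
    ultimately have "M $$ (i, p i) = 0"
      using rows i by simp
    then show ?thesis
      using i by (intro prod_zero) auto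
  qed
  have "(\<Prod>i = 0..<n. M $$ (i, \<pi> i)) = M $$ (0, \<pi> 0) * (\<Prod>i = Suc 0..<n. M $$ (i, \<pi> i))"
    using n by (rule prod.atLeast_Suc_lessThan)
  also have "(\<Prod>i = Suc 0..<n. M $$ (i, \<pi> i)) = 1"
  proof (rule prod.neutral, intro ballI)
    fix i assume i: "i \<in> {Suc 0..<n}"
    then have "h i < n" "g (h i) = i"
      using bij_betw_apply[OF h] g by (simp_all add: h_def bij_betw_inv_into_right)
    then show "M $$ (i, \<pi> i) = 1"
      using rows[of i "h i"] i by (simp add: \<pi>_def)
  qed
  finally have "det M = of_int (sign \<pi>) * M $$ (0, h 0)"
    using det_eq_single_permutation[OF M \<pi> other] n by (simp add: \<pi>_def)
  moreover have "sign \<pi> = 1 \<or> sign \<pi> = -1"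
    by (simp add: sign_def)
  ultimately show ?thesis
    unfolding h_def by blast
qed

lemma det_mat_non_injective_columns:
  assumes "\<not> inj_on L {0..<n}"
  shows "det (mat n n (\<lambda>(r, c). f (L c) r)) = 0"
proof -
  obtain c1 c2 where c: "c1 < n" "c2 < n" "c1 \<noteq> c2" "L c1 = L c2"
    using assms unfolding inj_on_def by auto
  then show ?thesis
    by (intro det_identical_columns[of _ n c1 c2]) (auto simp: col_mat)
qed

lemma of_int_mult_single_one:
  "(of_int s :: 'a::monoid_add \<Rightarrow>\<^sub>0 'b::comm_ring_1) * Poly_Mapping.single e 1 = Poly_Mapping.single e (of_int s)"
proof -
  have "(of_int s :: 'a \<Rightarrow>\<^sub>0 'b) * Poly_Mapping.single e 1 = Poly_Mapping.single 0 (of_int s) * Poly_Mapping.single e 1"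
    by (simp only: single_of_int)
  also have "\<dots> = Poly_Mapping.single (0 + e) (of_int s * 1)"
    by (rule mult_single)
  finally show ?thesis
    by simp
qed

lemma prod_single_poly_mapping:
  fixes e :: "'i \<Rightarrow> 'a::comm_monoid_add" and c :: "'i \<Rightarrow> 'b::comm_semiring_1"
  assumes "finite A"
  shows "(\<Prod>x\<in>A. Poly_Mapping.single (e x) (c x)) = Poly_Mapping.single (\<Sum>x\<in>A. e x) (\<Prod>x\<in>A. c x)"
  using assms by (induction A rule: finite_induct) (simp_all add: mult_single)

section \<open>The square and the rotation tau\<close>

definition square :: "nat \<Rightarrow> (nat \<times> nat) set" where
  "square m = {1..m} \<times> {1..m}"

definition centre :: "nat \<Rightarrow> nat \<times> nat" where
  "centre m = (mid m, mid m)"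

definition antidiagonal :: "nat \<Rightarrow> nat \<times> nat \<Rightarrow> bool" where
  "antidiagonal m p \<longleftrightarrow> snd p = bar m (fst p)"

definition flip :: "nat \<Rightarrow> nat \<times> nat \<Rightarrow> nat \<times> nat" where
  "flip m p = (bar m (fst p), fst p)"

lemma bar_in_range: "i \<in> {1..m} \<Longrightarrow> bar m i \<in> {1..m}"
  by (auto simp: bar_def)

lemma bar_bar: "i \<in> {1..m} \<Longrightarrow> bar m (bar m i) = i"
  by (auto simp: bar_def)

lemma abs_bar_bar_diff: "i \<in> {1..m} \<Longrightarrow> \<bar>int (bar m i) - int (bar m (bar m i))\<bar> = \<bar>int i - int (bar m i)\<bar>"
  by (simp add: bar_bar abs_minus_commute)

lemma tau_in_square: "p \<in> square m \<Longrightarrow> tau m p \<in> square m"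
  by (auto simp: tau_def square_def bar_def)

lemma tau_tau_tau_tau: "p \<in> square m \<Longrightarrow> tau m (tau m (tau m (tau m p))) = p"
  by (auto simp: tau_def square_def bar_bar)

lemma inj_on_tau: "inj_on (tau m) (square m)"
  by (rule inj_on_inverseI[where g = "\<lambda>p. tau m (tau m (tau m p))"]) (rule tau_tau_tau_tau)

lemma antidiagonal_flip: "fst p \<in> {1..m} \<Longrightarrow> antidiagonal m (flip m p)"
  by (simp add: antidiagonal_def flip_def bar_bar)

lemma nxt_in: "nxt k \<in> {1, 2, 3}"
  by (simp add: nxt_def) presburger

lemma nxt_nxt_nxt: "k \<in> {1, 2, 3} \<Longrightarrow> nxt (nxt (nxt k)) = k"
  by (auto simp: nxt_def)

lemma nxt_distinct: "k \<in> {1, 2, 3} \<Longrightarrow> nxt k \<noteq> k \<and> nxt (nxt k) \<noteq> k \<and> nxt (nxt k) \<noteq> nxt k"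
  by (elim insertE emptyE) (simp_all add: nxt_def)

locale odd_grid =
  fixes m :: nat
  assumes odd_m: "odd m"
begin

lemma m_pos: "0 < m"
  using odd_m odd_pos by blast

lemma mid_in_range: "mid m \<in> {1..m}"
  using odd_m by (auto simp: mid_def elim!: oddE)

lemma bar_eq_mid_iff: "bar m i = mid m \<longleftrightarrow> i = mid m" if "i \<in> {1..m}"
  using odd_m that by (auto simp: mid_def bar_def elim!: oddE)

lemma bar_mid: "bar m (mid m) = mid m"
  using bar_eq_mid_iff mid_in_range by blast

lemma kap_eq: "2 * kap m + 1 = m^2"
proof -
  have "odd (m^2)" using odd_m by simp
  then show ?thesis by (auto simp: kap_def elim!: oddE)
qed

lemma square_eq: "square m = Om m \<union> {centre m}"
  using mid_in_range by (auto simp: square_def centre_def Om_def)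

lemma Om_eq: "Om m = square m - {centre m}"
  by (simp add: Om_def square_def centre_def)

lemma centre_notin_Om: "centre m \<notin> Om m"
  by (simp add: Om_def centre_def)

lemma Om_subset_square: "Om m \<subseteq> square m"
  by (auto simp: square_eq)

lemma tau_square: "tau m ` square m = square m"
proof
  show "tau m ` square m \<subseteq> square m" using tau_in_square by blast
  show "square m \<subseteq> tau m ` square m"
  proof
    fix p assume "p \<in> square m"
    then have "p = tau m (tau m (tau m (tau m p)))" and "tau m (tau m (tau m p)) \<in> square m"
      by (simp_all add: tau_tau_tau_tau tau_in_square)
    then show "p \<in> tau m ` square m" by blast
  qed
qed

lemma tau_centre: "tau m (centre m) = centre m"
  by (simp add: tau_def centre_def bar_mid)

lemma tau_Om: "tau m ` Om m = Om m"
proof -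
  have "tau m ` (square m - {centre m}) = tau m ` square m - tau m ` {centre m}"
    using inj_on_tau by (rule inj_on_image_set_diff) (auto simp: square_eq)
  also have "\<dots> = square m - {centre m}"
    by (simp add: tau_square tau_centre)
  finally show ?thesis
    using centre_notin_Om by (simp add: square_eq)
qed

lemma tau_image_Diff: "X \<subseteq> Om m \<Longrightarrow> tau m ` (Om m - X) = Om m - tau m ` X"
  using inj_on_subset[OF inj_on_tau Om_subset_square] by (simp add: inj_on_image_set_diff tau_Om)

lemma image_tau_tau_tau_tau: "X \<subseteq> square m \<Longrightarrow> tau m ` tau m ` tau m ` tau m ` X = X"
  by (force simp: image_image tau_tau_tau_tau subset_iff)

text \<open>The hypotheses give tau ` tau ` S k = S (nxt (nxt k)); as tau has order four,
  S k = S (nxt^4 k) = S (nxt k).\<close>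
lemma tau_cycle:
  assumes sub: "\<And>k. k \<in> {1, 2, 3} \<Longrightarrow> S k \<subseteq> Om m"
    and compl: "\<And>k. k \<in> {1, 2, 3} \<Longrightarrow> tau m ` S k = Om m - S (nxt k)"
    and k: "k \<in> {1, 2, 3}"
  shows "S (nxt k) = S k"
proof -
  have twice: "tau m ` tau m ` S j = S (nxt (nxt j))" if j: "j \<in> {1, 2, 3}" for j
  proof -
    have "tau m ` tau m ` S j = Om m - tau m ` S (nxt j)"
      using compl[OF j] sub[OF nxt_in] by (simp add: tau_image_Diff)
    also have "\<dots> = S (nxt (nxt j))"
      using compl[OF nxt_in] sub[OF nxt_in] by auto
    finally show ?thesis .
  qed
  have "S k = tau m ` tau m ` tau m ` tau m ` S k"
    using sub[OF k] Om_subset_square by (simp add: image_tau_tau_tau_tau)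
  also have "\<dots> = S (nxt (nxt (nxt (nxt k))))"
    using twice[OF k] twice[OF nxt_in[of "nxt k"]] by simp
  finally show ?thesis
    using nxt_nxt_nxt[OF k] by simp
qed

end

section \<open>The three parts of the hypergraph\<close>

lemma V_disjoint: "k \<in> {1, 2, 3} \<Longrightarrow> l \<in> {1, 2, 3} \<Longrightarrow> k \<noteq> l \<Longrightarrow> V m k \<inter> V m l = {}"
  by (auto simp: V_def)

lemma y0_notin_V: "y0 \<notin> V m k"
  by (auto simp: V_def y0_def)

lemma V_subset_Hk: "V m k \<subseteq> Hk m"
  by (auto simp: V_def Hk_def)

lemma y0_in_Hk: "y0 \<in> Hk m"
  by (auto simp: y0_def Hk_def)

lemma finite_V: "finite (V m k)"
  by (simp add: V_def)

lemma card_V: "card (V m k) = kap m"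
proof -
  have card: "card (f ` {2..kap m + 1}) = kap m" if "inj f" for f :: "nat \<Rightarrow> vtx"
    using that by (simp add: card_image inj_on_subset)
  have "V m 1 = (\<lambda>i. (i, 1, 1)) ` {2..kap m + 1}" "V m 2 = (\<lambda>i. (1, i, 1)) ` {2..kap m + 1}"
    "k \<noteq> 1 \<Longrightarrow> k \<noteq> 2 \<Longrightarrow> V m k = (\<lambda>i. (1, 1, i)) ` {2..kap m + 1}"
    by (auto simp: V_def)
  then show ?thesis
    using card[of "\<lambda>i. (i, 1, 1)"] card[of "\<lambda>i. (1, i, 1)"] card[of "\<lambda>i. (1, 1, i)"]
    by (cases "k = 1 \<or> k = 2") (auto simp: inj_def)
qed

lemma Hk_eq: "Hk m = V m 1 \<union> V m 2 \<union> V m 3 \<union> {y0}"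
  by (auto simp: Hk_def V_def y0_def)

lemma Hk_cases:
  assumes "y \<in> Hk m"
  obtains "y = y0" | k where "k \<in> {1, 2, 3}" and "y \<in> V m k"
  using assms unfolding Hk_eq by blast

lemma bigblock_subset_Hk: "bigblock m k \<subseteq> Hk m"
  by (simp add: bigblock_def V_subset_Hk y0_in_Hk)

lemma V_subset_bigblock_nxt: "k \<in> {1, 2, 3} \<Longrightarrow> V m k \<subseteq> bigblock m (nxt k)"
  by (auto simp: bigblock_def nxt_nxt_nxt)

lemma (in odd_grid) card_bigblock:
  assumes "k \<in> {1, 2, 3}"
  shows "card (bigblock m k) = m^2"
proof -
  have "V m (nxt k) \<inter> V m (nxt (nxt k)) = {}"
    using nxt_distinct[OF nxt_in, of k] by (intro V_disjoint nxt_in) auto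
  then show ?thesis
    by (simp add: bigblock_def card_Un_disjoint finite_V card_V y0_notin_V kap_eq[symmetric])
qed

lemma bigblock_notin_singletons: "bigblock m k \<notin> (\<lambda>y. {y}) ` V m k"
  using y0_notin_V by (auto simp: bigblock_def)

definition on_parts :: "nat \<Rightarrow> (nat \<Rightarrow> vtx \<Rightarrow> 'a) \<Rightarrow> 'a \<Rightarrow> vtx \<Rightarrow> 'a" where
  "on_parts m f a y =
     (if y \<in> V m 1 then f 1 y else if y \<in> V m 2 then f 2 y else if y \<in> V m 3 then f 3 y else a)"

lemma on_parts_V: "k \<in> {1, 2, 3} \<Longrightarrow> y \<in> V m k \<Longrightarrow> on_parts m f a y = f k y"
  using V_disjoint[of 1 2 m] V_disjoint[of 1 3 m] V_disjoint[of 2 3 m] by (auto simp: on_parts_def)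

lemma on_parts_y0: "on_parts m f a y0 = a"
  by (simp add: on_parts_def y0_notin_V)

definition part_preserving :: "nat \<Rightarrow> (vtx \<Rightarrow> vtx) \<Rightarrow> bool" where
  "part_preserving m \<sigma> \<longleftrightarrow> bij_betw \<sigma> (Hk m) (Hk m) \<and> (\<forall>k\<in>{1, 2, 3}. \<sigma> ` V m k = V m k)"

lemma part_preserving_on_parts:
  assumes f: "\<And>k. k \<in> {1, 2, 3} \<Longrightarrow> bij_betw (f k) (V m k) (V m k)"
  shows "part_preserving m (on_parts m f y0)"
proof -
  have part: "bij_betw (on_parts m f y0) (V m k) (V m k)" if "k \<in> {1, 2, 3}" for k
    using f[OF that] by (rule bij_betw_cong[THEN iffD1, rotated]) (metis on_parts_V that)
  have "bij_betw (on_parts m f y0) (V m 1 \<union> V m 2 \<union> V m 3) (V m 1 \<union> V m 2 \<union> V m 3)"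
    using V_disjoint[of 1 2 m] V_disjoint[of 1 3 m] V_disjoint[of 2 3 m]
    by (intro bij_betw_combine part) auto
  then have "bij_betw (on_parts m f y0) (V m 1 \<union> V m 2 \<union> V m 3 \<union> {y0})
      (V m 1 \<union> V m 2 \<union> V m 3 \<union> {on_parts m f y0 y0})"
    using y0_notin_V by (intro notIn_Un_bij_betw) (auto simp: on_parts_y0)
  then show ?thesis
    using part unfolding part_preserving_def by (simp add: Hk_eq on_parts_y0 bij_betw_def)
qed

lemma part_preserving_V:
  "part_preserving m \<sigma> \<Longrightarrow> k \<in> {1, 2, 3} \<Longrightarrow> bij_betw \<sigma> (V m k) (V m k)"
  unfolding part_preserving_def bij_betw_def by (metis V_subset_Hk inj_on_subset)

lemma part_preserving_y0:
  assumes "part_preserving m \<sigma>"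
  shows "\<sigma> y0 = y0"
proof (rule ccontr)
  have bij: "bij_betw \<sigma> (Hk m) (Hk m)"
    using assms by (simp add: part_preserving_def)
  assume "\<sigma> y0 \<noteq> y0"
  moreover have "\<sigma> y0 \<in> Hk m"
    by (rule bij_betw_apply[OF bij y0_in_Hk])
  ultimately obtain k where "k \<in> {1, 2, 3}" "\<sigma> y0 \<in> V m k"
    by (auto simp: Hk_eq)
  then have "\<sigma> y0 \<in> \<sigma> ` V m k"
    using assms unfolding part_preserving_def by blast
  then obtain z where z: "z \<in> V m k" "\<sigma> z = \<sigma> y0"
    by (auto simp: image_iff)
  then have "z = y0"
    using inj_onD[OF bij_betw_imp_inj_on[OF bij]] V_subset_Hk y0_in_Hk by blast
  then show False
    using z(1) y0_notin_V by simp
qed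

lemma part_preserving_bigblock:
  assumes "part_preserving m \<sigma>" "k \<in> {1, 2, 3}"
  shows "bij_betw \<sigma> (bigblock m k) (bigblock m k)"
proof -
  have parts: "\<sigma> ` V m j = V m j" if "j \<in> {1, 2, 3}" for j
    using assms(1) that unfolding part_preserving_def by blast
  have "\<sigma> ` bigblock m k = bigblock m k"
    using part_preserving_y0[OF assms(1)] by (simp add: bigblock_def image_Un parts[OF nxt_in])
  moreover have "inj_on \<sigma> (bigblock m k)"
    using assms(1) bigblock_subset_Hk unfolding part_preserving_def bij_betw_def by (metis inj_on_subset)
  ultimately show ?thesis
    by (simp add: bij_betw_def)
qed

section \<open>Admissible labelings\<close>

definition admissible :: "nat \<Rightarrow> (vtx \<Rightarrow> label) \<Rightarrow> bool" where
  "admissible m J \<longleftrightarrow> (\<forall>k\<in>{1, 2, 3}.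
     bij_betw (Jc J k) (bigblock m k) (square m) \<and> (\<forall>y\<in>V m k. antidiagonal m (Jc J k y)) \<and>
     (\<forall>i\<in>{1..m}. card {y \<in> V m k. fst (Jc J k y) = i} = nat \<bar>int i - int (bar m i)\<bar>))"

lemma admissibleD:
  assumes "admissible m J" and "k \<in> {1, 2, 3}"
  shows admissible_bij: "bij_betw (Jc J k) (bigblock m k) (square m)"
    and admissible_antidiagonal: "y \<in> V m k \<Longrightarrow> antidiagonal m (Jc J k y)"
    and admissible_row_count:
      "i \<in> {1..m} \<Longrightarrow> card {y \<in> V m k. fst (Jc J k y) = i} = nat \<bar>int i - int (bar m i)\<bar>"
  using assms unfolding admissible_def by blast+

text \<open>The label of a vertex of V k whose k-th component is antidiagonal, in terms of its
  (nxt k)-th component p = (a, b): the other two components are tau p = (b, bar a) and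
  flip p = (bar a, a).\<close>
definition Vlabel :: "nat \<Rightarrow> nat \<Rightarrow> nat \<times> nat \<Rightarrow> label" where
  "Vlabel m k p =
     (if k = 1 then (flip m p, p, tau m p) else if k = 2 then (tau m p, flip m p, p)
      else (p, tau m p, flip m p))"

definition centre_label :: "nat \<Rightarrow> label" where
  "centre_label m = (centre m, centre m, centre m)"

lemma label_eq_Jc: "J y = (Jc J 1 y, Jc J 2 y, Jc J 3 y)"
  by (simp add: Jc_def)

lemma Jc_in_square: "triple_labeling m J \<Longrightarrow> y \<in> Hk m \<Longrightarrow> Jc J k y \<in> square m"
  unfolding triple_labeling_def by (force simp: Jc_def square_def)

lemma Jc_Vlabel:
  assumes "J y = Vlabel m k p" and "k \<in> {1, 2, 3}"
  shows "Jc J (nxt k) y = p" and "Jc J (nxt (nxt k)) y = tau m p" and "Jc J k y = flip m p"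
  using assms by (auto simp: Jc_def Vlabel_def nxt_def)

lemma Vlabel_is_triple:
  assumes "p \<in> square m"
  shows "\<exists>i\<in>{1..m}. \<exists>j\<in>{1..m}. \<exists>l\<in>{1..m}. Vlabel m k p = ((i, j), (j, l), (l, i))"
  using assms bar_in_range by (cases p) (auto simp: Vlabel_def square_def tau_def flip_def)

lemma eq_Vlabel_if_antidiagonal:
  assumes "triple_labeling m J" "y \<in> Hk m" "k \<in> {1, 2, 3}" "antidiagonal m (Jc J k y)"
  shows "J y = Vlabel m k (Jc J (nxt k) y)"
proof -
  obtain i j l where "i \<in> {1..m}" "j \<in> {1..m}" "l \<in> {1..m}" "J y = ((i, j), (j, l), (l, i))"
    using assms(1,2) unfolding triple_labeling_def by blast
  then show ?thesis
    using assms(3,4) bar_bar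
    by (auto simp: Vlabel_def Jc_def antidiagonal_def tau_def flip_def nxt_def)
qed

lemma card_fst_flip:
  assumes "\<And>y. y \<in> A \<Longrightarrow> fst (g y) \<in> {1..m}" and "i \<in> {1..m}"
  shows "card {y \<in> A. fst (flip m (g y)) = i} = card {y \<in> A. fst (g y) = bar m i}"
  using assms bar_bar by (intro arg_cong[where f = card] Collect_cong) (auto simp: flip_def)

context odd_grid
begin

lemma admissible_Vlabel:
  assumes tl: "triple_labeling m J" and adm: "admissible m J" and k: "k \<in> {1, 2, 3}" and y: "y \<in> V m k"
  shows "J y = Vlabel m k (Jc J (nxt k) y)" and "Jc J (nxt k) y \<in> Om m"
proof -
  have yH: "y \<in> Hk m" using y V_subset_Hk by blast
  show J: "J y = Vlabel m k (Jc J (nxt k) y)"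
    using admissible_antidiagonal[OF adm k y] by (rule eq_Vlabel_if_antidiagonal[OF tl yH k])
  have "card {y \<in> V m k. fst (Jc J k y) = mid m} = 0"
    using admissible_row_count[OF adm k mid_in_range] by (simp add: bar_mid)
  then have "{y \<in> V m k. fst (Jc J k y) = mid m} = {}"
    by (simp add: finite_V)
  then have "fst (Jc J k y) \<noteq> mid m"
    using y by blast
  then have "fst (Jc J (nxt k) y) \<noteq> mid m"
    using Jc_Vlabel(3)[of J y, OF J k] bar_mid by (auto simp: flip_def)
  moreover have "Jc J (nxt k) y \<in> square m"
    by (rule Jc_in_square[OF tl yH])
  ultimately show "Jc J (nxt k) y \<in> Om m"
    by (auto simp: Om_eq centre_def)
qed

lemma admissible_image_tau:
  assumes "triple_labeling m J" "admissible m J" "k \<in> {1, 2, 3}"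
  shows "Jc J (nxt (nxt k)) ` V m k = tau m ` Jc J (nxt k) ` V m k"
  unfolding image_image using Jc_Vlabel(2)[OF admissible_Vlabel(1)[OF assms]] assms(3)
  by (intro image_cong) auto

lemma admissible_inj_on_V:
  assumes "admissible m J" "k \<in> {1, 2, 3}"
  shows "inj_on (Jc J (nxt k)) (V m k)"
  using bij_betw_imp_inj_on[OF admissible_bij[OF assms(1) nxt_in]] V_subset_bigblock_nxt[OF assms(2)]
  by (rule inj_on_subset)

lemma admissible_bigblock_partition:
  assumes tl: "triple_labeling m J" and adm: "admissible m J" and j: "j \<in> {1, 2, 3}"
  shows "Jc J j y0 = centre m"
    and "tau m ` Jc J (nxt (nxt j)) ` V m (nxt j) = Om m - Jc J j ` V m (nxt (nxt j))"
proof -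
  have bij: "bij_betw (Jc J j) (V m (nxt j) \<union> V m (nxt (nxt j)) \<union> {y0}) (Om m \<union> {centre m})"
    using admissible_bij[OF adm j] by (simp add: bigblock_def square_eq)
  have tau: "Jc J j ` V m (nxt j) = tau m ` Jc J (nxt (nxt j)) ` V m (nxt j)"
    using admissible_image_tau[OF tl adm nxt_in, of j] nxt_nxt_nxt[OF j] by simp
  have "Jc J (nxt (nxt j)) ` V m (nxt j) \<subseteq> Om m"
    using admissible_Vlabel(2)[OF tl adm nxt_in[of j]] by blast
  then have A: "Jc J j ` V m (nxt j) \<subseteq> Om m"
    unfolding tau using tau_Om by blast
  have B: "Jc J j ` V m (nxt (nxt j)) \<subseteq> Om m"
    using admissible_Vlabel(2)[OF tl adm nxt_in[of "nxt j"]] nxt_nxt_nxt[OF j] by auto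
  have "V m (nxt j) \<inter> V m (nxt (nxt j)) = {}"
    using nxt_distinct[OF nxt_in, of j] by (intro V_disjoint nxt_in) auto
  note partition = bij_betw_Un_singleton_partition[OF bij centre_notin_Om A B this]
  show "Jc J j y0 = centre m"
    using partition(1) y0_notin_V by simp
  show "tau m ` Jc J (nxt (nxt j)) ` V m (nxt j) = Om m - Jc J j ` V m (nxt (nxt j))"
    using partition(2) y0_notin_V by (simp add: tau)
qed

text \<open>The slice of J at k is Jc J (nxt k) ` V m k; for the paper's J^(1)(V^(3)) take k = 3.
  For an admissible labeling all three slices coincide.\<close>
lemma admissible_slices:
  assumes tl: "triple_labeling m J" and adm: "admissible m J" and k: "k \<in> {1, 2, 3}"
  shows "Jc J (nxt k) ` V m k = Jc J 1 ` V m 3"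
    and "tau m ` Jc J 1 ` V m 3 = Om m - Jc J 1 ` V m 3"
proof -
  define T where "T k = Jc J (nxt k) ` V m k" for k
  have T_Om: "T k \<subseteq> Om m" if "k \<in> {1, 2, 3}" for k
    using admissible_Vlabel(2)[OF tl adm that] by (auto simp: T_def)
  have T_tau: "tau m ` T k = Om m - T (nxt k)" if "k \<in> {1, 2, 3}" for k
    using admissible_bigblock_partition(2)[OF tl adm nxt_in, of "nxt k"] nxt_nxt_nxt[OF that]
    by (simp add: T_def)
  have cycle: "T (nxt k) = T k" if "k \<in> {1, 2, 3}" for k
    by (rule tau_cycle[where S = T, OF T_Om T_tau that])
  have "T k = T 3"
    using k cycle[of 1] cycle[of 2] cycle[of 3] by (auto simp: nxt_def)
  then show "Jc J (nxt k) ` V m k = Jc J 1 ` V m 3"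
    by (simp add: T_def nxt_def)
  show "tau m ` Jc J 1 ` V m 3 = Om m - Jc J 1 ` V m 3"
    using T_tau[of 3] cycle[of 3] by (simp add: T_def nxt_def)
qed

lemma admissible_centre_label:
  assumes "triple_labeling m J" "admissible m J"
  shows "J y0 = centre_label m"
  using label_eq_Jc[of J y0] admissible_bigblock_partition(1)[OF assms] by (simp add: centre_label_def)

lemma admissible_bij_betw_slice:
  assumes "triple_labeling m J" "admissible m J" "k \<in> {1, 2, 3}"
  shows "bij_betw (Jc J (nxt k)) (V m k) (Jc J 1 ` V m 3)"
  using admissible_inj_on_V[OF assms(2,3)] admissible_slices(1)[OF assms] by (simp add: bij_betw_def)

lemma admissible_valid:
  assumes tl: "triple_labeling m J" and adm: "admissible m J"
  shows "valid m (Jc J 1 ` V m 3)"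
proof -
  define S where "S = Jc J 1 ` V m 3"
  have inj: "inj_on (Jc J 1) (V m 3)"
    using admissible_inj_on_V[OF adm, of 3] by (simp add: nxt_def)
  have S_Om: "S \<subseteq> Om m"
    using admissible_Vlabel(2)[OF tl adm, of 3] by (auto simp: S_def nxt_def)
  have rows: "card {j. (i, j) \<in> S} = nat \<bar>int i - int (bar m i)\<bar>" if i: "i \<in> {1..m}" for i
  proof -
    have range: "fst (Jc J 1 y) \<in> {1..m}" if "y \<in> V m 3" for y
      using Jc_in_square[OF tl subsetD[OF V_subset_Hk that], of 1] by (simp add: square_def mem_Times_iff)
    have flip: "Jc J 3 y = flip m (Jc J 1 y)" if "y \<in> V m 3" for y
      using Jc_Vlabel(3)[of J y m 3, OF admissible_Vlabel(1)[OF tl adm _ that]] by (simp add: nxt_def)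
    have "card {j. (i, j) \<in> S} = card {y \<in> V m 3. fst (Jc J 1 y) = bar m (bar m i)}"
      using card_row_image[OF inj] bar_bar[OF i] by (simp add: S_def)
    also have "\<dots> = card {y \<in> V m 3. fst (flip m (Jc J 1 y)) = bar m i}"
      by (rule card_fst_flip[OF range bar_in_range[OF i], symmetric])
    also have "\<dots> = card {y \<in> V m 3. fst (Jc J 3 y) = bar m i}"
      using flip by (intro arg_cong[where f = card] Collect_cong) auto
    also have "\<dots> = nat \<bar>int i - int (bar m i)\<bar>"
      using admissible_row_count[OF adm _ bar_in_range[OF i]] abs_bar_bar_diff[OF i] by simp
    finally show ?thesis .
  qed
  have "card S = kap m"
    using card_image[OF inj] card_V by (simp add: S_def)
  moreover have "tau m ` S = iota m S"
    using admissible_slices(2)[OF tl adm, of 1] by (simp add: S_def iota_def)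
  ultimately show ?thesis
    unfolding valid_def S_def[symmetric] using S_Om rows by blast
qed

end

definition labeling_of_slices :: "nat \<Rightarrow> (nat \<Rightarrow> vtx \<Rightarrow> nat \<times> nat) \<Rightarrow> vtx \<Rightarrow> label" where
  "labeling_of_slices m g = on_parts m (\<lambda>k y. Vlabel m k (g k y)) (centre_label m)"

lemma Jc_labeling_of_slices:
  assumes "k \<in> {1, 2, 3}" and "y \<in> V m k"
  shows "Jc (labeling_of_slices m g) (nxt k) y = g k y"
    and "Jc (labeling_of_slices m g) (nxt (nxt k)) y = tau m (g k y)"
    and "Jc (labeling_of_slices m g) k y = flip m (g k y)"
  using Jc_Vlabel[of "labeling_of_slices m g" y m k "g k y"] assms
  by (simp_all add: labeling_of_slices_def on_parts_V)

lemma Jc_labeling_of_slices_y0: "Jc (labeling_of_slices m g) k y0 = centre m"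
  by (simp add: labeling_of_slices_def on_parts_y0 centre_label_def Jc_def)

context odd_grid
begin

lemma triple_labeling_of_slices:
  assumes "\<And>k y. k \<in> {1, 2, 3} \<Longrightarrow> y \<in> V m k \<Longrightarrow> g k y \<in> square m"
  shows "triple_labeling m (labeling_of_slices m g)"
  unfolding triple_labeling_def
proof
  fix y assume "y \<in> Hk m"
  then show "\<exists>i\<in>{1..m}. \<exists>j\<in>{1..m}. \<exists>l\<in>{1..m}.
      labeling_of_slices m g y = ((i, j), (j, l), (l, i))"
  proof (cases rule: Hk_cases)
    case 1
    then have "labeling_of_slices m g y = ((mid m, mid m), (mid m, mid m), (mid m, mid m))"
      by (simp add: labeling_of_slices_def on_parts_y0 centre_label_def centre_def)
    then show ?thesis
      using mid_in_range by blast
  next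
    case (2 k)
    then show ?thesis
      using Vlabel_is_triple[OF assms[OF 2], of k] by (simp add: labeling_of_slices_def on_parts_V)
  qed
qed

lemma bij_betw_labeling_of_slices:
  assumes valid: "valid m S" and g: "\<And>k. k \<in> {1, 2, 3} \<Longrightarrow> bij_betw (g k) (V m k) S"
    and j: "j \<in> {1, 2, 3}"
  shows "bij_betw (Jc (labeling_of_slices m g) j) (bigblock m j) (square m)"
proof -
  define J where "J = labeling_of_slices m g"
  have S_Om: "S \<subseteq> Om m" and tau_S: "tau m ` S = Om m - S"
    using valid by (auto simp: valid_def iota_def)
  have "bij_betw (tau m \<circ> g (nxt j)) (V m (nxt j)) (tau m ` S)"
    using g[OF nxt_in] inj_on_subset[OF inj_on_tau] S_Om Om_subset_square
    by (intro bij_betw_trans) (auto simp: inj_on_imp_bij_betw)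
  moreover have "Jc J j y = tau m (g (nxt j) y)" if "y \<in> V m (nxt j)" for y
    using Jc_labeling_of_slices(2)[OF nxt_in that] nxt_nxt_nxt[OF j] by (simp add: J_def)
  ultimately have A: "bij_betw (Jc J j) (V m (nxt j)) (tau m ` S)"
    by (auto intro: bij_betw_cong[THEN iffD1, rotated])
  have "Jc J j y = g (nxt (nxt j)) y" if "y \<in> V m (nxt (nxt j))" for y
    using Jc_labeling_of_slices(1)[OF nxt_in that] nxt_nxt_nxt[OF j] by (simp add: J_def)
  with g[OF nxt_in[of "nxt j"]] have B: "bij_betw (Jc J j) (V m (nxt (nxt j))) S"
    by (auto intro: bij_betw_cong[THEN iffD1, rotated])
  have "V m (nxt j) \<inter> V m (nxt (nxt j)) = {}"
    using nxt_distinct[OF nxt_in, of j] by (intro V_disjoint nxt_in) auto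
  then have "bij_betw (Jc J j) (V m (nxt j) \<union> V m (nxt (nxt j)) \<union> {y0}) (tau m ` S \<union> S \<union> {centre m})"
    using A B tau_S y0_notin_V centre_notin_Om S_Om Jc_labeling_of_slices_y0
    by (intro bij_betw_Un_singletonI) (auto simp: J_def)
  moreover have "tau m ` S \<union> S \<union> {centre m} = square m"
    using tau_S S_Om by (auto simp: square_eq)
  ultimately show ?thesis
    by (simp add: bigblock_def J_def)
qed

lemma admissible_labeling_of_slices:
  assumes valid: "valid m S" and g: "\<And>k. k \<in> {1, 2, 3} \<Longrightarrow> bij_betw (g k) (V m k) S"
  shows "admissible m (labeling_of_slices m g)"
  unfolding admissible_def
proof (intro ballI conjI)
  define J where "J = labeling_of_slices m g"
  have S_square: "S \<subseteq> square m"
    using valid Om_subset_square by (auto simp: valid_def)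
  fix k :: nat assume k: "k \<in> {1, 2, 3}"
  have range: "fst (g k y) \<in> {1..m}" if "y \<in> V m k" for y
    using bij_betw_apply[OF g[OF k] that] S_square by (auto simp: square_def)
  show "bij_betw (Jc J k) (bigblock m k) (square m)"
    using bij_betw_labeling_of_slices[OF valid g k] by (simp add: J_def)
  show "antidiagonal m (Jc J k y)" if "y \<in> V m k" for y
    using Jc_labeling_of_slices(3)[OF k that] antidiagonal_flip[OF range[OF that]] by (simp add: J_def)
  show "card {y \<in> V m k. fst (Jc J k y) = i} = nat \<bar>int i - int (bar m i)\<bar>" if i: "i \<in> {1..m}" for i
  proof -
    have "card {y \<in> V m k. fst (Jc J k y) = i} = card {y \<in> V m k. fst (flip m (g k y)) = i}"
      using Jc_labeling_of_slices(3)[OF k] by (intro arg_cong[where f = card] Collect_cong) (auto simp: J_def)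
    also have "\<dots> = card {y \<in> V m k. fst (g k y) = bar m i}"
      by (rule card_fst_flip[OF range i])
    also have "\<dots> = card {j. (bar m i, j) \<in> S}"
      using card_row_image[OF bij_betw_imp_inj_on[OF g[OF k]]] bij_betw_imp_surj_on[OF g[OF k]] by simp
    also have "\<dots> = nat \<bar>int i - int (bar m i)\<bar>"
      using valid bar_in_range[OF i] abs_bar_bar_diff[OF i] by (simp add: valid_def)
    finally show ?thesis .
  qed
qed

lemma exists_admissible:
  assumes valid: "valid m S"
  shows "\<exists>J. triple_labeling m J \<and> admissible m J \<and> Jc J 1 ` V m 3 = S"
proof -
  have S_square: "S \<subseteq> square m"
    using valid Om_subset_square by (auto simp: valid_def)
  then have "finite S"
    by (rule finite_subset) (simp add: square_def)
  then have "\<forall>k. \<exists>g. bij_betw g (V m k) S"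
    using valid card_V by (intro allI finite_same_card_bij finite_V) (simp_all add: valid_def)
  then obtain g where g: "\<And>k. bij_betw (g k) (V m k) S"
    by metis
  have "triple_labeling m (labeling_of_slices m g)"
    using bij_betw_apply[OF g] S_square by (intro triple_labeling_of_slices) blast
  moreover have "Jc (labeling_of_slices m g) 1 ` V m 3 = g 3 ` V m 3"
    using Jc_labeling_of_slices(1)[of 3] by (intro image_cong) (simp_all add: nxt_def)
  ultimately show ?thesis
    using admissible_labeling_of_slices[OF valid g] bij_betw_imp_surj_on[OF g] by auto
qed

end

lemma triple_labeling_reindex:
  assumes tl: "triple_labeling m J" and \<sigma>: "part_preserving m \<sigma>" and J': "\<forall>y\<in>Hk m. J' y = J (\<sigma> y)"
  shows "triple_labeling m J'"
  unfolding triple_labeling_def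
proof
  fix y assume y: "y \<in> Hk m"
  then have "\<sigma> y \<in> Hk m"
    using \<sigma> by (auto simp: part_preserving_def bij_betw_def)
  then have "\<exists>i\<in>{1..m}. \<exists>j\<in>{1..m}. \<exists>l\<in>{1..m}. J (\<sigma> y) = ((i, j), (j, l), (l, i))"
    using tl unfolding triple_labeling_def by blast
  then show "\<exists>i\<in>{1..m}. \<exists>j\<in>{1..m}. \<exists>l\<in>{1..m}. J' y = ((i, j), (j, l), (l, i))"
    using J' y by simp
qed

lemma slice_reindex:
  assumes \<sigma>: "part_preserving m \<sigma>" and J': "\<forall>y\<in>Hk m. J' y = J (\<sigma> y)"
  shows "Jc J' 1 ` V m 3 = Jc J 1 ` V m 3"
proof -
  have "Jc J' 1 y = Jc J 1 (\<sigma> y)" if "y \<in> V m 3" for y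
    using J' subsetD[OF V_subset_Hk that] by (simp add: Jc_def)
  then have "Jc J' 1 ` V m 3 = Jc J 1 ` \<sigma> ` V m 3"
    unfolding image_image by (rule image_cong[OF refl])
  then show ?thesis
    using \<sigma> by (simp add: part_preserving_def)
qed

lemma admissible_reindex:
  assumes adm: "admissible m J" and \<sigma>: "part_preserving m \<sigma>" and J': "\<forall>y\<in>Hk m. J' y = J (\<sigma> y)"
  shows "admissible m J'"
proof -
  have Jc': "Jc J' k y = Jc J k (\<sigma> y)" if "y \<in> Hk m" for k y
    using J' that by (simp add: Jc_def)
  show ?thesis
    unfolding admissible_def
  proof (intro ballI conjI)
    fix k :: nat assume k: "k \<in> {1, 2, 3}"
    have "bij_betw (Jc J k \<circ> \<sigma>) (bigblock m k) (square m)"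
      using part_preserving_bigblock[OF \<sigma> k] admissible_bij[OF adm k] by (rule bij_betw_trans)
    then show "bij_betw (Jc J' k) (bigblock m k) (square m)"
    proof (rule bij_betw_cong[THEN iffD1, rotated])
      fix y assume "y \<in> bigblock m k"
      then show "(Jc J k \<circ> \<sigma>) y = Jc J' k y"
        using Jc'[OF subsetD[OF bigblock_subset_Hk]] by simp
    qed
    fix y assume y: "y \<in> V m k"
    have "Jc J' k y = Jc J k (\<sigma> y)"
      using Jc'[OF subsetD[OF V_subset_Hk y]] .
    then show "antidiagonal m (Jc J' k y)"
      using admissible_antidiagonal[OF adm k bij_betw_apply[OF part_preserving_V[OF \<sigma> k] y]] by simp
  next
    fix k i :: nat assume k: "k \<in> {1, 2, 3}" and i: "i \<in> {1..m}"
    have "card {y \<in> V m k. fst (Jc J' k y) = i} = card {y \<in> V m k. fst (Jc J k (\<sigma> y)) = i}"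
      by (intro arg_cong[where f = card] Collect_cong conj_cong refl)
        (simp add: Jc'[OF subsetD[OF V_subset_Hk]])
    also have "\<dots> = card {y \<in> V m k. fst (Jc J k y) = i}"
      by (rule card_Collect_bij_betw[OF part_preserving_V[OF \<sigma> k]])
    finally show "card {y \<in> V m k. fst (Jc J' k y) = i} = nat \<bar>int i - int (bar m i)\<bar>"
      using admissible_row_count[OF adm k i] by simp
  qed
qed

context odd_grid
begin

text \<open>Two admissible labelings with the same slice differ by the permutation that matches, on each
  part V k, the (nxt k)-th components; these determine the whole labels.\<close>
lemma admissible_same_slice_reindex:
  assumes tl: "triple_labeling m J" and adm: "admissible m J"
    and tl': "triple_labeling m J'" and adm': "admissible m J'"
    and same: "Jc J' 1 ` V m 3 = Jc J 1 ` V m 3"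
  shows "\<exists>\<sigma>. part_preserving m \<sigma> \<and> (\<forall>y\<in>Hk m. J' y = J (\<sigma> y))"
proof -
  define s where "s k y = inv_into (V m k) (Jc J (nxt k)) (Jc J' (nxt k) y)" for k y
  define \<sigma> where "\<sigma> = on_parts m s y0"
  have bij: "bij_betw (Jc J (nxt k)) (V m k) (Jc J 1 ` V m 3)"
    and bij': "bij_betw (Jc J' (nxt k)) (V m k) (Jc J 1 ` V m 3)" if "k \<in> {1, 2, 3}" for k
    using admissible_bij_betw_slice[OF tl adm that] admissible_bij_betw_slice[OF tl' adm' that] same
    by simp_all
  have s_bij: "bij_betw (s k) (V m k) (V m k)"
    and s_Jc: "y \<in> V m k \<Longrightarrow> Jc J (nxt k) (s k y) = Jc J' (nxt k) y" if "k \<in> {1, 2, 3}" for k y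
    using bij_betw_inv_into_comp[OF bij[OF that] bij'[OF that]] by (simp_all add: s_def[abs_def])
  have "part_preserving m \<sigma>"
    unfolding \<sigma>_def by (rule part_preserving_on_parts[OF s_bij])
  moreover have "J' y = J (\<sigma> y)" if "y \<in> Hk m" for y
    using that
  proof (cases rule: Hk_cases)
    case 1
    then show ?thesis
      using admissible_centre_label[OF tl adm] admissible_centre_label[OF tl' adm']
      by (simp add: \<sigma>_def on_parts_y0)
  next
    case (2 k)
    then have \<sigma>y: "\<sigma> y = s k y" "s k y \<in> V m k"
      using bij_betw_apply[OF s_bij] by (simp_all add: \<sigma>_def on_parts_V)
    have "J' y = Vlabel m k (Jc J' (nxt k) y)"
      by (rule admissible_Vlabel(1)[OF tl' adm' 2])
    also have "Jc J' (nxt k) y = Jc J (nxt k) (\<sigma> y)"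
      using s_Jc[OF 2] \<sigma>y(1) by simp
    also have "Vlabel m k (Jc J (nxt k) (\<sigma> y)) = J (\<sigma> y)"
      using admissible_Vlabel(1)[OF tl adm 2(1)] \<sigma>y by simp
    finally show ?thesis .
  qed
  ultimately show ?thesis
    by (intro exI[of _ \<sigma>]) blast
qed

end

section \<open>Evaluation of a labeling\<close>

text \<open>The row of the entry 1 in A^(k)|p>; the centre goes to the first row, where X^(k)_a sits.\<close>
definition row_index :: "nat \<Rightarrow> (nat \<times> nat \<Rightarrow> nat) \<Rightarrow> nat \<times> nat \<Rightarrow> nat" where
  "row_index m \<phi> p = (if p = centre m then 1 else \<phi> p)"

locale labeling_evaluation = odd_grid +
  fixes \<phi> :: "nat \<times> nat \<Rightarrow> nat" and hs :: "vtx list"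
  assumes bij_\<phi>: "bij_betw \<phi> (Om m) {2..m^2}" and distinct_hs: "distinct hs" and set_hs: "set hs = Hk m"
begin

lemma bij_row_index: "bij_betw (row_index m \<phi>) (square m) {1..m^2}"
proof -
  have "bij_betw (row_index m \<phi>) (Om m) {2..m^2}"
    using bij_\<phi> by (rule bij_betw_cong[THEN iffD1, rotated])
      (use centre_notin_Om in \<open>auto simp: row_index_def\<close>)
  then have "bij_betw (row_index m \<phi>) (Om m \<union> {centre m}) ({2..m^2} \<union> {row_index m \<phi> (centre m)})"
    using centre_notin_Om by (intro notIn_Un_bij_betw) (auto simp: row_index_def)
  moreover have "{2..m^2} \<union> {1} = {1..m^2::nat}"
    using m_pos by auto
  ultimately show ?thesis
    by (simp add: square_eq row_index_def)
qed

lemma Avec_first_row: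
  assumes "p \<in> square m"
  shows "Avec m \<phi> k p 1 = (if antidiagonal m p then Xv k (fst p) else 0)"
proof (cases "p = centre m")
  case True
  then show ?thesis
    by (simp add: Avec_def antidiagonal_def centre_def bar_mid)
next
  case False
  then have "\<phi> p \<noteq> 1"
    using bij_betw_apply[OF bij_\<phi>] assms by (fastforce simp: Om_eq)
  then show ?thesis
    using False by (cases p) (auto simp: Avec_def antidiagonal_def centre_def)
qed

lemma Avec_other_row:
  "2 \<le> r \<Longrightarrow> Avec m \<phi> k p r = (if row_index m \<phi> p = r then 1 else 0)"
  by (cases p) (auto simp: Avec_def row_index_def centre_def)

lemma row_index_pos: "p \<in> square m \<Longrightarrow> 1 \<le> row_index m \<phi> p"
  using bij_betw_apply[OF bij_row_index] by simp

lemma row_index_eq_1_iff: "p \<in> square m \<Longrightarrow> row_index m \<phi> p = 1 \<longleftrightarrow> p = centre m"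
  using bij_betw_apply[OF bij_\<phi>, of p] by (auto simp: row_index_def Om_eq)

lemma Avec_succ_row:
  "p \<in> square m \<Longrightarrow> 0 < i \<Longrightarrow> Avec m \<phi> k p (i + 1) = (if row_index m \<phi> p - 1 = i then 1 else 0)"
  using Avec_other_row[of "i + 1" k p] row_index_pos[of p] by auto

lemma det_Avec_bij:
  assumes L: "bij_betw L {0..<m^2} (square m)"
  shows "\<exists>s::int. (s = 1 \<or> s = -1) \<and>
    det (mat (m^2) (m^2) (\<lambda>(r, c). Avec m \<phi> k (L c) (r + 1))) = of_int s * Xv k (mid m)"
proof -
  define M where "M = mat (m^2) (m^2) (\<lambda>(r, c). Avec m \<phi> k (L c) (r + 1))"
  define g where "g = (\<lambda>c. row_index m \<phi> (L c) - 1)"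
  have "bij_betw (\<lambda>r. r - 1) {1..m^2} {0..<m^2}"
    by (rule bij_betwI[where g = Suc]) auto
  from bij_betw_trans[OF bij_betw_trans[OF L bij_row_index] this]
  have g: "bij_betw g {0..<m^2} {0..<m^2}"
    by (simp add: g_def comp_def)
  have "0 < m^2"
    using m_pos by simp
  moreover have "M $$ (i, c) = (if g c = i then 1 else 0)" if "0 < i" "i < m^2" "c < m^2" for i c
  proof -
    have "L c \<in> square m"
      using bij_betw_apply[OF L] that(3) by simp
    then show ?thesis
      using Avec_succ_row[OF _ that(1), of "L c" k] that by (simp add: M_def g_def)
  qed
  ultimately obtain s :: int where s: "s = 1 \<or> s = -1"
    and det: "det M = of_int s * M $$ (0, inv_into {0..<m^2} g 0)"
    using det_eq_first_row_entry[of M "m^2" g] g by (auto simp: M_def)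
  define c0 where "c0 = inv_into {0..<m^2} g 0"
  have c0: "c0 < m^2" "g c0 = 0"
    using bij_betw_apply[OF bij_betw_inv_into[OF g]] bij_betw_inv_into_right[OF g] \<open>0 < m^2\<close>
    by (auto simp: c0_def)
  then have "L c0 = centre m"
    using row_index_eq_1_iff[of "L c0"] row_index_pos[of "L c0"] bij_betw_apply[OF L]
    by (simp add: g_def)
  then have "M $$ (0, c0) = Xv k (mid m)"
    using c0(1) \<open>0 < m^2\<close> by (simp add: M_def Avec_def centre_def)
  then show ?thesis
    using s det unfolding M_def c0_def by auto
qed

lemma blockdet_eq_det_nth:
  assumes "e \<subseteq> Hk m"
  obtains cols where "bij_betw ((!) cols) {0..<card e} e"
    and "blockdet m \<phi> hs J k e = det (mat (card e) (card e) (\<lambda>(r, c). Avec m \<phi> k (Jc J k (cols ! c)) (r + 1)))"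
proof
  define cols where "cols = filter (\<lambda>y. y \<in> e) hs"
  have "distinct cols" "set cols = e"
    using distinct_hs set_hs assms by (auto simp: cols_def)
  then show "bij_betw ((!) cols) {0..<card e} e"
    using bij_betw_nth[of cols "{..<length cols}" e] distinct_card by (fastforce simp: atLeast0LessThan)
  show "blockdet m \<phi> hs J k e = det (mat (card e) (card e) (\<lambda>(r, c). Avec m \<phi> k (Jc J k (cols ! c)) (r + 1)))"
    by (simp add: blockdet_def Let_def cols_def)
qed

lemma blockdet_bigblock:
  assumes e: "e \<subseteq> Hk m" and card_e: "card e = m^2" and square: "\<forall>y\<in>e. Jc J k y \<in> square m"
  shows "\<exists>c. blockdet m \<phi> hs J k e = Poly_Mapping.single (Poly_Mapping.single (k, mid m) 1) c \<and>
           (c \<noteq> 0 \<longleftrightarrow> bij_betw (Jc J k) e (square m))"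
proof -
  obtain cols where cols: "bij_betw ((!) cols) {0..<m^2} e"
    and det: "blockdet m \<phi> hs J k e = det (mat (m^2) (m^2) (\<lambda>(r, c). Avec m \<phi> k (Jc J k (cols ! c)) (r + 1)))"
    using blockdet_eq_det_nth[OF e, of J k] card_e by metis
  show ?thesis
  proof (cases "bij_betw (Jc J k) e (square m)")
    case True
    then have "bij_betw (\<lambda>c. Jc J k (cols ! c)) {0..<m^2} (square m)"
      using bij_betw_trans[OF cols True] by (simp add: comp_def)
    then obtain s :: int where s: "s = 1 \<or> s = -1"
      and "blockdet m \<phi> hs J k e = of_int s * Xv k (mid m)"
      using det_Avec_bij det by metis
    then show ?thesis
      using True by (intro exI[of _ "of_int s"]) (auto simp: Xv_def of_int_mult_single_one)
  next
    case False
    have "card (square m) = m^2"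
      by (simp add: square_def power2_eq_square)
    then have "\<not> inj_on (Jc J k) e"
      using False square card_e inj_on_imp_bij_betw_card[of "square m" "Jc J k" e]
      by (auto simp: square_def)
    then have "\<not> inj_on (\<lambda>c. Jc J k (cols ! c)) {0..<m^2}"
      using inj_on_imageI[of "Jc J k" "(!) cols" "{0..<m^2}"] bij_betw_imp_surj_on[OF cols]
      by (auto simp: comp_def)
    then have "blockdet m \<phi> hs J k e = 0"
      using det det_mat_non_injective_columns[where f = "\<lambda>p r. Avec m \<phi> k p (r + 1)"] by simp
    then show ?thesis
      using False by (intro exI[of _ 0]) simp
  qed
qed

lemma blockdet_singleton:
  assumes y: "y \<in> Hk m" and square: "Jc J k y \<in> square m"
  shows "\<exists>c. blockdet m \<phi> hs J k {y} = Poly_Mapping.single (Poly_Mapping.single (k, fst (Jc J k y)) 1) c \<and>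
           (c \<noteq> 0 \<longleftrightarrow> antidiagonal m (Jc J k y))"
proof -
  obtain cols where "bij_betw ((!) cols) {0..<1} {y}"
    and det: "blockdet m \<phi> hs J k {y} = det (mat 1 1 (\<lambda>(r, c). Avec m \<phi> k (Jc J k (cols ! c)) (r + 1)))"
    using blockdet_eq_det_nth[of "{y}" J k] y by auto
  then have "cols ! 0 = y"
    by (auto simp: bij_betw_def)
  then have "blockdet m \<phi> hs J k {y} = Avec m \<phi> k (Jc J k y) 1"
    using det by (subst (asm) det_single) auto
  also have "\<dots> = (if antidiagonal m (Jc J k y) then Xv k (fst (Jc J k y)) else 0)"
    by (rule Avec_first_row[OF square])
  finally show ?thesis
    by (auto simp: Xv_def)
qed

end

lemma lookup_sum_single_range:
  "Poly_Mapping.lookup (\<Sum>j\<in>{1..m::nat}. Poly_Mapping.single (k, j) (d j :: nat)) (k', i) =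
     (if k = k' \<and> i \<in> {1..m} then d i else 0)"
proof -
  have "Poly_Mapping.lookup (\<Sum>j\<in>{1..m}. Poly_Mapping.single (k, j) (d j)) (k', i) =
      (\<Sum>j\<in>{1..m}. if k = k' \<and> j = i then d j else 0)"
    unfolding lookup_sum by (intro sum.cong refl) (auto simp: lookup_single when_def)
  also have "\<dots> = (if k = k' \<and> i \<in> {1..m} then d i else 0)"
    by (cases "k = k'") simp_all
  finally show ?thesis .
qed

lemma exponent_eq_monoX_iff:
  assumes range: "\<And>k y. k \<in> {1, 2, 3} \<Longrightarrow> y \<in> V m k \<Longrightarrow> f k y \<in> {1..m}"
  shows "(\<Sum>k\<in>{1, 2, 3}. Poly_Mapping.single (k, mid m) 1 +
        (\<Sum>y\<in>V m k. Poly_Mapping.single (k, f k y) 1)) = monoX m \<longleftrightarrow>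
      (\<forall>k\<in>{1, 2, 3}. \<forall>i\<in>{1..m}. card {y \<in> V m k. f k y = i} = nat \<bar>int i - int (bar m i)\<bar>)"
    (is "?lhs = monoX m \<longleftrightarrow> _")
proof -
  define d where "d i = nat \<bar>int i - int (bar m i)\<bar>" for i
  have lhs: "Poly_Mapping.lookup ?lhs (k', i) = (\<Sum>k\<in>{1, 2, 3}.
      if k = k' then (if mid m = i then 1 else 0) + card {y \<in> V m k. f k y = i} else 0)" for k' i
    by (simp add: lookup_sum lookup_add lookup_single when_def sum.If_cases Int_def conj_commute finite_V)
  have rhs: "Poly_Mapping.lookup (monoX m) (k', i) = (\<Sum>k\<in>{1, 2, 3}.
      if k = k' then (if mid m = i then 1 else 0) + (if i \<in> {1..m} then d i else 0) else 0)" for k' i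
    unfolding monoX_def d_def[symmetric]
    by (simp add: lookup_sum lookup_add lookup_sum_single_range lookup_single when_def)
  have outside: "card {y \<in> V m k. f k y = i} = 0" if "k \<in> {1, 2, 3}" "i \<notin> {1..m}" for k i
  proof -
    have "{y \<in> V m k. f k y = i} = {}"
      using range that by fastforce
    then show ?thesis
      by (simp only: card.empty)
  qed
  have "?lhs = monoX m \<longleftrightarrow> (\<forall>k' i. Poly_Mapping.lookup ?lhs (k', i) = Poly_Mapping.lookup (monoX m) (k', i))"
    by (simp add: lookup_inject[symmetric] fun_eq_iff)
  also have "\<dots> \<longleftrightarrow>
      (\<forall>k\<in>{1, 2, 3}. \<forall>i. card {y \<in> V m k. f k y = i} = (if i \<in> {1..m} then d i else 0))"
    unfolding lhs rhs by (auto simp: sum.delta)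
  also have "\<dots> \<longleftrightarrow> (\<forall>k\<in>{1, 2, 3}. \<forall>i\<in>{1..m}. card {y \<in> V m k. f k y = i} = d i)"
    using outside by auto
  finally show ?thesis
    unfolding d_def .
qed

definition slice_exponent :: "nat \<Rightarrow> (vtx \<Rightarrow> label) \<Rightarrow> nat \<Rightarrow> (nat \<times> nat) \<Rightarrow>\<^sub>0 nat" where
  "slice_exponent m J k =
     Poly_Mapping.single (k, mid m) 1 + (\<Sum>y\<in>V m k. Poly_Mapping.single (k, fst (Jc J k y)) 1)"

definition slice_coefficient ::
  "nat \<Rightarrow> (nat \<times> nat \<Rightarrow> nat) \<Rightarrow> vtx list \<Rightarrow> (vtx \<Rightarrow> label) \<Rightarrow> nat \<Rightarrow> complex" where
  "slice_coefficient m \<phi> hs J k =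
     Poly_Mapping.lookup (\<Prod>e\<in>Epart m k. blockdet m \<phi> hs J k e) (slice_exponent m J k)"

context labeling_evaluation
begin

lemma prod_blockdet_Epart:
  assumes tl: "triple_labeling m J" and k: "k \<in> {1, 2, 3}"
  shows "(\<Prod>e\<in>Epart m k. blockdet m \<phi> hs J k e) =
      Poly_Mapping.single (slice_exponent m J k) (slice_coefficient m \<phi> hs J k)"
    and "slice_coefficient m \<phi> hs J k \<noteq> 0 \<longleftrightarrow>
      bij_betw (Jc J k) (bigblock m k) (square m) \<and> (\<forall>y\<in>V m k. antidiagonal m (Jc J k y))"
proof -
  have in_square: "Jc J k y \<in> square m" if "y \<in> Hk m" for y
    using Jc_in_square[OF tl that] .
  obtain c0 where big: "blockdet m \<phi> hs J k (bigblock m k) = Poly_Mapping.single (Poly_Mapping.single (k, mid m) 1) c0"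
    and c0: "c0 \<noteq> 0 \<longleftrightarrow> bij_betw (Jc J k) (bigblock m k) (square m)"
    using blockdet_bigblock[OF bigblock_subset_Hk card_bigblock[OF k]] in_square bigblock_subset_Hk by blast
  have "\<forall>y\<in>V m k. \<exists>c.
      blockdet m \<phi> hs J k {y} = Poly_Mapping.single (Poly_Mapping.single (k, fst (Jc J k y)) 1) c \<and>
      (c \<noteq> 0 \<longleftrightarrow> antidiagonal m (Jc J k y))"
    using blockdet_singleton in_square V_subset_Hk by blast
  then obtain C where single: "\<And>y. y \<in> V m k \<Longrightarrow>
      blockdet m \<phi> hs J k {y} = Poly_Mapping.single (Poly_Mapping.single (k, fst (Jc J k y)) 1) (C y)"
    and C: "\<And>y. y \<in> V m k \<Longrightarrow> C y \<noteq> 0 \<longleftrightarrow> antidiagonal m (Jc J k y)"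
    by metis
  have "(\<Prod>e\<in>Epart m k. blockdet m \<phi> hs J k e) =
      blockdet m \<phi> hs J k (bigblock m k) * (\<Prod>y\<in>V m k. blockdet m \<phi> hs J k {y})"
    unfolding Epart_def using bigblock_notin_singletons
    by (simp add: finite_V prod.reindex inj_on_def)
  also have "\<dots> = Poly_Mapping.single (slice_exponent m J k) (c0 * (\<Prod>y\<in>V m k. C y))"
    by (simp add: big single finite_V prod_single_poly_mapping mult_single slice_exponent_def cong: prod.cong)
  finally have prod: "(\<Prod>e\<in>Epart m k. blockdet m \<phi> hs J k e) = \<dots>" .
  then have coeff: "slice_coefficient m \<phi> hs J k = c0 * (\<Prod>y\<in>V m k. C y)"
    by (simp add: slice_coefficient_def)
  then show "(\<Prod>e\<in>Epart m k. blockdet m \<phi> hs J k e) =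
      Poly_Mapping.single (slice_exponent m J k) (slice_coefficient m \<phi> hs J k)"
    using prod by simp
  show "slice_coefficient m \<phi> hs J k \<noteq> 0 \<longleftrightarrow>
      bij_betw (Jc J k) (bigblock m k) (square m) \<and> (\<forall>y\<in>V m k. antidiagonal m (Jc J k y))"
    unfolding coeff using c0 C by (simp add: finite_V prod_zero_iff)
qed

lemma evalH_eq_single:
  assumes tl: "triple_labeling m J"
  shows "evalH m \<phi> hs J = Poly_Mapping.single (\<Sum>k\<in>{1, 2, 3}. slice_exponent m J k)
      (\<Prod>k\<in>{1, 2, 3}. slice_coefficient m \<phi> hs J k)"
proof -
  have "evalH m \<phi> hs J =
      (\<Prod>k\<in>{1, 2, 3}. Poly_Mapping.single (slice_exponent m J k) (slice_coefficient m \<phi> hs J k))"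
    unfolding evalH_def by (intro prod.cong refl prod_blockdet_Epart(1)[OF tl])
  then show ?thesis
    by (simp add: prod_single_poly_mapping)
qed

lemma nonzero_labeling_iff_admissible:
  assumes tl: "triple_labeling m J"
  shows "nonzero_labeling m \<phi> hs J \<longleftrightarrow> admissible m J"
proof -
  have range: "fst (Jc J k y) \<in> {1..m}" if "k \<in> {1, 2, 3}" "y \<in> V m k" for k y
    using Jc_in_square[OF tl subsetD[OF V_subset_Hk that(2)], of k] by (simp add: square_def mem_Times_iff)
  have "nonzero_labeling m \<phi> hs J \<longleftrightarrow>
      (\<Sum>k\<in>{1, 2, 3}. slice_exponent m J k) = monoX m \<and> (\<forall>k\<in>{1, 2, 3}. slice_coefficient m \<phi> hs J k \<noteq> 0)"
    unfolding nonzero_labeling_def evalH_eq_single[OF tl] by (simp add: lookup_single when_def)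
  also have "\<dots> \<longleftrightarrow>
      (\<forall>k\<in>{1, 2, 3}. \<forall>i\<in>{1..m}.
        card {y \<in> V m k. fst (Jc J k y) = i} = nat \<bar>int i - int (bar m i)\<bar>) \<and>
      (\<forall>k\<in>{1, 2, 3}. bij_betw (Jc J k) (bigblock m k) (square m) \<and> (\<forall>y\<in>V m k. antidiagonal m (Jc J k y)))"
    unfolding slice_exponent_def
    using exponent_eq_monoX_iff[where f = "\<lambda>k y. fst (Jc J k y)", OF range]
    by (simp only: prod_blockdet_Epart(2)[OF tl] cong: ball_cong)
  also have "\<dots> \<longleftrightarrow> admissible m J"
    unfolding admissible_def by blast
  finally show ?thesis .
qed

lemma nonzero_labeling_valid:
  assumes "triple_labeling m J" and "nonzero_labeling m \<phi> hs J"
  shows "valid m (Jc J 1 ` V m 3)"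
  using assms admissible_valid by (simp add: nonzero_labeling_iff_admissible)

lemma exists_nonzero_labeling:
  assumes "valid m S"
  shows "\<exists>J. triple_labeling m J \<and> nonzero_labeling m \<phi> hs J \<and> Jc J 1 ` V m 3 = S"
proof -
  obtain J where "triple_labeling m J" "admissible m J" "Jc J 1 ` V m 3 = S"
    using exists_admissible[OF assms] by blast
  then show ?thesis
    by (intro exI[of _ J]) (simp add: nonzero_labeling_iff_admissible)
qed

lemma nonzero_labeling_same_slice_iff:
  assumes tl: "triple_labeling m J" and nz: "nonzero_labeling m \<phi> hs J"
  shows "(triple_labeling m J' \<and> nonzero_labeling m \<phi> hs J' \<and> Jc J' 1 ` V m 3 = Jc J 1 ` V m 3) \<longleftrightarrow>
    (\<exists>\<sigma>. part_preserving m \<sigma> \<and> (\<forall>y\<in>Hk m. J' y = J (\<sigma> y)))"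
proof
  have adm: "admissible m J"
    using nonzero_labeling_iff_admissible[OF tl] nz by simp
  show "\<exists>\<sigma>. part_preserving m \<sigma> \<and> (\<forall>y\<in>Hk m. J' y = J (\<sigma> y))"
    if "triple_labeling m J' \<and> nonzero_labeling m \<phi> hs J' \<and> Jc J' 1 ` V m 3 = Jc J 1 ` V m 3"
  proof -
    have "admissible m J'"
      using nonzero_labeling_iff_admissible[of J'] that by simp
    then show ?thesis
      using admissible_same_slice_reindex[OF tl adm] that by simp
  qed
  show "triple_labeling m J' \<and> nonzero_labeling m \<phi> hs J' \<and> Jc J' 1 ` V m 3 = Jc J 1 ` V m 3"
    if reindexed: "\<exists>\<sigma>. part_preserving m \<sigma> \<and> (\<forall>y\<in>Hk m. J' y = J (\<sigma> y))"
  proof -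
    obtain \<sigma> where "part_preserving m \<sigma>" "\<forall>y\<in>Hk m. J' y = J (\<sigma> y)"
      using reindexed by blast
    note reindex = triple_labeling_reindex[OF tl this] admissible_reindex[OF adm this] slice_reindex[OF this]
    then show ?thesis
      using nonzero_labeling_iff_admissible[OF reindex(1)] by simp
  qed
qed

end

theorem proposition6p5:
  fixes m :: nat and \<phi> :: "nat \<times> nat \<Rightarrow> nat" and hs :: "vtx list"
  assumes "odd m" and "m > 1"
    and "bij_betw \<phi> (Om m) {2..m^2}"
    and "distinct hs" and "set hs = Hk m"
  shows "(\<forall>J. triple_labeling m J \<and> nonzero_labeling m \<phi> hs J \<longrightarrow> valid m (Jc J 1 ` V m 3))
    \<and> (\<forall>S. valid m S \<longrightarrow>
         (\<exists>J. triple_labeling m J \<and> nonzero_labeling m \<phi> hs J \<and> Jc J 1 ` V m 3 = S \<and>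
            (\<forall>J'. (triple_labeling m J' \<and> nonzero_labeling m \<phi> hs J' \<and> Jc J' 1 ` V m 3 = S)
               \<longleftrightarrow> (\<exists>\<sigma>. bij_betw \<sigma> (Hk m) (Hk m) \<and> (\<forall>k\<in>{1,2,3}. \<sigma> ` V m k = V m k) \<and>
                        (\<forall>y\<in>Hk m. J' y = J (\<sigma> y))))))"
proof -
  interpret labeling_evaluation m \<phi> hs
    using assms by unfold_locales
  show ?thesis
  proof (intro conjI allI impI)
    fix J assume "triple_labeling m J \<and> nonzero_labeling m \<phi> hs J"
    then show "valid m (Jc J 1 ` V m 3)"
      using nonzero_labeling_valid by blast
  next
    fix S assume "valid m S"
    then obtain J where J: "triple_labeling m J" "nonzero_labeling m \<phi> hs J" "Jc J 1 ` V m 3 = S"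
      using exists_nonzero_labeling by blast
    show "\<exists>J. triple_labeling m J \<and> nonzero_labeling m \<phi> hs J \<and> Jc J 1 ` V m 3 = S \<and>
        (\<forall>J'. (triple_labeling m J' \<and> nonzero_labeling m \<phi> hs J' \<and> Jc J' 1 ` V m 3 = S)
           \<longleftrightarrow> (\<exists>\<sigma>. bij_betw \<sigma> (Hk m) (Hk m) \<and> (\<forall>k\<in>{1,2,3}. \<sigma> ` V m k = V m k) \<and>
                    (\<forall>y\<in>Hk m. J' y = J (\<sigma> y))))"
      using nonzero_labeling_same_slice_iff[OF J(1,2)] J unfolding part_preserving_def
      by (intro exI[of _ J]) simp
  qed
qed

end
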